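(* In the primal–dual differential form setting below, assume in addition that $\star_h:\hat\Lambda^k_d\to\hat\Lambda^{2-k}_p$ is bijective for $k=1,2$. Let $\sigma(t)\in\hat\Lambda^1_p$ be continuously differentiable in $t$, and let $\tilde Q(t)\in\hat\Lambda^1_d$, $\rho(t)\in\hat\Lambda^2_p$ satisfy $\partial_t\sigma+\star_h\tilde Q+\delta^h\rho=0$. Let $\zeta_p=\delta^h\sigma$ and define the dual vorticity 2-form $\zeta_d\,dS:=\star_h^{-1}\zeta_p\in\hat\Lambda^2_d$ and $\tilde v:=\star_h^{-1}\sigma\in\hat\Lambda^1_d$. Then $\zeta_d\,dS=d\tilde v$ and $$\partial_t(\zeta_d\,dS)+d\tilde Q=0 .$$ Consequently, for every cell $e'$ of the dual mesh, $\frac{d}{dt}\int_{e'}\zeta_d\,dS=-\int_{\partial e'}\tilde Q$, and since the integral of $\tilde Q$ along an edge takes the same value from either adjacent cell (with opposite orientation), $\zeta_d$ is locally conserved.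
   Context: Primal–dual differential form setting. $\Omega$ is a smooth closed oriented two-dimensional Riemannian surface with area form $dS$ and Hodge star $\star$; for $k$-forms $\alpha,\beta$ write $\langle\alpha,\beta\rangle=\int_\Omega\alpha\wedge\star\beta$ (the $L^2$ inner product). For $k=0,1,2$, $\hat\Lambda^k_p$ (primal) and $\hat\Lambda^k_d$ (dual) are finite-dimensional spaces of square-integrable, piecewise smooth $k$-forms on $\Omega$ (on a primal and a dual mesh respectively) on which the exterior derivative $d$ is defined globally, with $d\hat\Lambda^k_p\subset\hat\Lambda^{k+1}_p$ and $d\hat\Lambda^k_d\subset\hat\Lambda^{k+1}_d$ for $k=0,1$, $d^2=0$, and such that integration by parts holds: $\int_\Omega d\alpha\wedge\beta=(-1)^{j+1}\int_\Omega\alpha\wedge d\beta$ for $\alpha$ a $j$-form and $\beta$ a $(1-j)$-form taken from these spaces. $\hat\Lambda^0_p$ contains the constant functions. The discrete codifferential $\delta^h:\hat\Lambda^k_p\to\hat\Lambda^{k-1}_p$ ($k=1,2$) is defined by $\langle\gamma,\delta^h\omega\rangle=\langle d\gamma,\omega\rangle$ for all $\gamma\in\hat\Lambda^{k-1}_p$. The discrete Hodge star $\star_h:\hat\Lambda^k_d\to\hat\Lambda^{2-k}_p$ is defined by $\langle\gamma,\star_h\omega\rangle=(-1)^k\int_\Omega\gamma\wedge\omega$ for all $\gamma\in\hat\Lambda^{2-k}_p$. Elements of $\hat\Lambda^1_d$ have tangentially continuous traces across dual-mesh edges, so that their integral along a dual edge is single-valued, and Stokes' theorem $\int_{e'}d\alpha=\int_{\partial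 e'}\alpha$ holds on each dual cell $e'$ for $\alpha\in\hat\Lambda^1_d$. *)

theory Defs
  imports "HOL-Analysis.Analysis"
begin

text \<open>The types 'a, 'b, 'c model (piecewise smooth,
square integrable) 0-, 1- and 2-forms on Omega.\<close>

record ('a, 'b, 'c) pd_struct =
  intg :: "'c \<Rightarrow> real"
  w02  :: "'a \<Rightarrow> 'c \<Rightarrow> 'c"      \<comment> \<open>wedge of a 0-form and a 2-form\<close>
  w11  :: "'b \<Rightarrow> 'b \<Rightarrow> 'c"
  w20  :: "'c \<Rightarrow> 'a \<Rightarrow> 'c"
  hs0  :: "'a \<Rightarrow> 'c"              \<comment> \<open>continuous Hodge star on 0-forms\<close>
  hs1  :: "'b \<Rightarrow> 'b"
  hs2  :: "'c \<Rightarrow> 'a"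
  ext0 :: "'a \<Rightarrow> 'b"
  ext1 :: "'b \<Rightarrow> 'c"
  P0 :: "'a set"  P1 :: "'b set"  P2 :: "'c set"
  D0 :: "'a set"  D1 :: "'b set"  D2 :: "'c set"

definition ip0 :: "('a,'b,'c,'z) pd_struct_scheme \<Rightarrow> 'a \<Rightarrow> 'a \<Rightarrow> real" where
  "ip0 S x y = intg S (w02 S x (hs0 S y))"
definition ip1 :: "('a,'b,'c,'z) pd_struct_scheme \<Rightarrow> 'b \<Rightarrow> 'b \<Rightarrow> real" where
  "ip1 S x y = intg S (w11 S x (hs1 S y))"
definition ip2 :: "('a,'b,'c,'z) pd_struct_scheme \<Rightarrow> 'c \<Rightarrow> 'c \<Rightarrow> real" where
  "ip2 S x y = intg S (w20 S x (hs2 S y))"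

definition fin_dim_space :: "'v::real_vector set \<Rightarrow> bool" where
  "fin_dim_space V \<longleftrightarrow> (\<exists>B. finite B \<and> B \<subseteq> V \<and> span B = V)"

definition pd_setting :: "('a::real_vector,'b::real_vector,'c::real_vector) pd_struct \<Rightarrow> bool" where
  "pd_setting S \<longleftrightarrow>
     linear (intg S) \<and> bilinear (w02 S) \<and> bilinear (w11 S) \<and> bilinear (w20 S) \<and>
     (\<forall>x y. w20 S y x = w02 S x y) \<and> (\<forall>x y. w11 S x y = - w11 S y x) \<and>
     linear (hs0 S) \<and> linear (hs1 S) \<and> linear (hs2 S) \<and>
     linear (ext0 S) \<and> linear (ext1 S) \<and>
     fin_dim_space (P0 S) \<and> fin_dim_space (P1 S) \<and> fin_dim_space (P2 S) \<and>
     fin_dim_space (D0 S) \<and> fin_dim_space (D1 S) \<and> fin_dim_space (D2 S) \<and>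
     ext0 S ` P0 S \<subseteq> P1 S \<and> ext1 S ` P1 S \<subseteq> P2 S \<and>
     ext0 S ` D0 S \<subseteq> D1 S \<and> ext1 S ` D1 S \<subseteq> D2 S \<and>
     (\<forall>x \<in> P0 S \<union> D0 S. ext1 S (ext0 S x) = 0) \<and>
     \<comment> \<open>integration by parts, j = 0 and j = 1\<close>
     (\<forall>x \<in> P0 S \<union> D0 S. \<forall>y \<in> P1 S \<union> D1 S.
        intg S (w11 S (ext0 S x) y) = - intg S (w02 S x (ext1 S y))) \<and>
     (\<forall>x \<in> P1 S \<union> D1 S. \<forall>y \<in> P0 S \<union> D0 S.
        intg S (w20 S (ext1 S x) y) = intg S (w11 S x (ext0 S y))) \<and>
     \<comment> \<open>the L2 inner product is symmetric and positive definite\<close>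
     (\<forall>x y. ip0 S x y = ip0 S y x) \<and> (\<forall>x y. ip1 S x y = ip1 S y x) \<and>
     (\<forall>x y. ip2 S x y = ip2 S y x) \<and>
     (\<forall>x. x \<noteq> 0 \<longrightarrow> ip0 S x x > 0) \<and> (\<forall>x. x \<noteq> 0 \<longrightarrow> ip1 S x x > 0) \<and>
     (\<forall>x. x \<noteq> 0 \<longrightarrow> ip2 S x x > 0)"

definition codiff1 :: "('a,'b,'c) pd_struct \<Rightarrow> 'b \<Rightarrow> 'a" where
  "codiff1 S w = (THE x. x \<in> P0 S \<and> (\<forall>g \<in> P0 S. ip0 S g x = ip1 S (ext0 S g) w))"
definition codiff2 :: "('a,'b,'c) pd_struct \<Rightarrow> 'c \<Rightarrow> 'b" where
  "codiff2 S w = (THE x. x \<in> P1 S \<and> (\<forall>g \<in> P1 S. ip1 S g x = ip2 S (ext1 S g) w))"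

definition dstar1 :: "('a,'b,'c) pd_struct \<Rightarrow> 'b \<Rightarrow> 'b" where
  "dstar1 S w = (THE x. x \<in> P1 S \<and> (\<forall>g \<in> P1 S. ip1 S g x = - intg S (w11 S g w)))"
definition dstar2 :: "('a,'b,'c) pd_struct \<Rightarrow> 'c \<Rightarrow> 'a" where
  "dstar2 S w = (THE x. x \<in> P0 S \<and> (\<forall>g \<in> P0 S. ip0 S g x = intg S (w02 S g w)))"

text \<open>Dual mesh: finitely many dual cells, each with a (linear) cell integral of
2-forms, summing to the integral over Omega; the boundary of each cell is a signed
(orientation +1/-1) set of dual edges; the line integral of a dual 1-form along an
edge is single-valued (eint); Stokes' theorem holds on each cell; every edge is
shared by exactly two cells with opposite orientations.\<close>
definition dual_mesh ::
  "('a::real_vector,'b::real_vector,'c::real_vector) pd_struct \<Rightarrow> 'cell set \<Rightarrow>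
   ('cell \<Rightarrow> 'edge set) \<Rightarrow> ('cell \<Rightarrow> 'edge \<Rightarrow> real) \<Rightarrow> ('cell \<Rightarrow> 'c \<Rightarrow> real) \<Rightarrow>
   ('edge \<Rightarrow> 'b \<Rightarrow> real) \<Rightarrow> bool" where
  "dual_mesh S cells edges osgn cint eint \<longleftrightarrow>
     finite cells \<and>
     (\<forall>w \<in> D2 S. intg S w = (\<Sum>c\<in>cells. cint c w)) \<and>
     (\<forall>c \<in> cells. finite (edges c) \<and> linear (cint c) \<and>
        (\<forall>e \<in> edges c. osgn c e = 1 \<or> osgn c e = -1) \<and>
        (\<forall>a \<in> D1 S. cint c (ext1 S a) = (\<Sum>e\<in>edges c. osgn c e * eint e a))) \<and>
     (\<forall>e \<in> (\<Union>c\<in>cells. edges c). \<exists>c1 c2. c1 \<noteq> c2 \<and>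
        {c \<in> cells. e \<in> edges c} = {c1, c2} \<and> osgn c1 e = - osgn c2 e)"

end

theory Submission
  imports Defs
begin

text \<open>
  The primal equation
  \<open>\<partial>\<^sub>t \<sigma> + \<star>\<^sub>h Q + \<delta>\<^sup>h \<rho> = 0\<close> is turned into an equation for the dual vorticity
  \<open>Z = \<star>\<^sub>h\<^sup>-\<^sup>1 (\<delta>\<^sup>h \<sigma>)\<close> by applying \<open>\<star>\<^sub>h\<^sup>-\<^sup>1 \<delta>\<^sup>h\<close> to it.  Two algebraic identities drive this:
  the commuting property \<open>\<star>\<^sub>h d u = \<delta>\<^sup>h \<star>\<^sub>h u\<close> for dual 1-forms \<open>u\<close> (integration by parts) and
  \<open>\<delta>\<^sup>h \<delta>\<^sup>h = 0\<close> (dual to \<open>d d = 0\<close>).  The first gives \<open>Z = d (\<star>\<^sub>h\<^sup>-\<^sup>1 \<sigma>)\<close>; both together give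
  \<open>\<star>\<^sub>h\<^sup>-\<^sup>1 \<delta>\<^sup>h (\<partial>\<^sub>t \<sigma>) = - d Q\<close>.  Since \<open>\<star>\<^sub>h\<^sup>-\<^sup>1 \<delta>\<^sup>h\<close> is linear on the finite-dimensional space
  of primal 1-forms, it commutes with time differentiation, so \<open>\<partial>\<^sub>t Z = - d Q\<close>; integrating over
  a dual cell and applying Stokes' theorem yields the cellwise balance law.
\<close>

section \<open>Linear maps on finite-dimensional subspaces\<close>

text \<open>Additivity and homogeneity on a subset \<open>V\<close> only; the inverse of \<open>\<star>\<^sub>h\<close> is
  linear in this sense on the primal spaces but not defined elsewhere.\<close>

definition linear_on :: "'a::real_vector set \<Rightarrow> ('a \<Rightarrow> 'b::real_vector) \<Rightarrow> bool" where
  "linear_on V f \<longleftrightarrow>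
     (\<forall>x\<in>V. \<forall>y\<in>V. f (x + y) = f x + f y) \<and> (\<forall>x\<in>V. \<forall>a. f (a *\<^sub>R x) = a *\<^sub>R f x)"

lemma linear_on_comp:
  assumes "linear g" "linear_on V f"
  shows "linear_on V (\<lambda>x. g (f x))"
  using assms unfolding linear_on_def by (simp add: linear_add linear_scale)

lemma linear_on_comp_linear:
  assumes "linear_on W g" "linear f" "f ` V \<subseteq> W" "subspace V"
  shows "linear_on V (\<lambda>x. g (f x))"
  using assms unfolding linear_on_def
  by (auto simp: linear_add linear_scale subspace_add subspace_scale image_subset_iff)

lemma linear_on_inv_into:
  assumes f: "linear f" and A: "subspace A" and inj: "inj_on f A"
  shows "linear_on (f ` A) (inv_into A f)"
  unfolding linear_on_def
proof (intro conjI ballI allI)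
  fix p q assume "p \<in> f ` A" "q \<in> f ` A"
  then obtain a b where "a \<in> A" "b \<in> A" "p = f a" "q = f b" by blast
  then show "inv_into A f (p + q) = inv_into A f p + inv_into A f q"
    using inv_into_f_f[OF inj] A by (metis linear_add[OF f] subspace_add)
next
  fix p r assume "p \<in> f ` A"
  then obtain a where "a \<in> A" "p = f a" by blast
  then show "inv_into A f (r *\<^sub>R p) = r *\<^sub>R inv_into A f p"
    using inv_into_f_f[OF inj] A by (metis linear_scale[OF f] subspace_scale)
qed

lemma fin_dim_space_subspace: "fin_dim_space V \<Longrightarrow> subspace V"
  unfolding fin_dim_space_def using subspace_span by metis

lemma linear_on_diff:
  assumes "linear_on V f" "subspace V" "x \<in> V" "y \<in> V"
  shows "f (x - y) = f x - f y"
proof -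
  have "x - y \<in> V" using assms subspace_diff by blast
  then have "f x = f (x - y) + f y" using assms unfolding linear_on_def by (metis diff_add_cancel)
  then show ?thesis by simp
qed

lemma linear_on_sum:
  assumes f: "linear_on V f" and V: "subspace V" and "finite B" "B \<subseteq> V"
  shows "f (\<Sum>b\<in>B. c b *\<^sub>R b) = (\<Sum>b\<in>B. c b *\<^sub>R f b)"
  using \<open>finite B\<close> \<open>B \<subseteq> V\<close>
proof (induction B rule: finite_induct)
  case empty
  have "f 0 = f 0 - f 0" using linear_on_diff[OF f V] V subspace_0 by (metis diff_self)
  then show ?case by simp
next
  case (insert x F)
  have "(\<Sum>b\<in>F. c b *\<^sub>R b) \<in> V" "c x *\<^sub>R x \<in> V"
    using insert V by (auto intro: subspace_sum subspace_scale)
  then show ?case using insert f unfolding linear_on_def by simp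
qed

lemma coefficients_convergent_subseq:
  fixes D :: "nat \<Rightarrow> 'a \<Rightarrow> real"
  assumes fin: "finite B" and bnd: "\<And>n b. b \<in> B \<Longrightarrow> \<bar>D n b\<bar> \<le> 1"
  shows "\<exists>l r. strict_mono r \<and> (\<forall>b\<in>B. (\<lambda>n. D (r n) b) \<longlonglongrightarrow> l b)"
proof -
  have "bounded ((\<lambda>x. x b) ` range D)" if "b \<in> B" for b
    unfolding bounded_iff using bnd[OF that] by auto
  from compact_lemma_general[where f=D and proj="\<lambda>x b. x b" and unproj=id and basis=B,
      OF fin this, simplified]
  obtain l and r :: "nat \<Rightarrow> nat" where r: "strict_mono r"
    and conv: "\<forall>\<epsilon>>0. eventually (\<lambda>n. \<forall>b\<in>B. dist (D (r n) b) (l b) < \<epsilon>) sequentially"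
    by blast
  have "(\<lambda>n. D (r n) b) \<longlonglongrightarrow> l b" if "b \<in> B" for b
    unfolding tendsto_iff
  proof (intro allI impI)
    fix \<epsilon> :: real assume "\<epsilon> > 0"
    then show "eventually (\<lambda>n. dist (D (r n) b) (l b) < \<epsilon>) sequentially"
    proof -
      have "eventually (\<lambda>n. \<forall>b\<in>B. dist (D (r n) b) (l b) < \<epsilon>) sequentially"
        using conv \<open>\<epsilon> > 0\<close> by blast
      then show ?thesis by (rule eventually_mono) (use that in blast)
    qed
  qed
  then show ?thesis using r by blast
qed

text \<open>Combinations of an independent finite family with \<open>\<ell>\<^sup>1\<close>-normalised coefficients stay
  away from zero: a limit point of the coefficients would give a nontrivial vanishing combination.\<close>

lemma independent_normalized_combinations_not_null:
  fixes B :: "'b::real_normed_vector set" and D :: "nat \<Rightarrow> 'b \<Rightarrow> real"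
  assumes fin: "finite B" and ind: "independent B"
    and normalized: "\<And>n. (\<Sum>b\<in>B. \<bar>D n b\<bar>) = 1"
  shows "\<not> (\<lambda>n. \<Sum>b\<in>B. D n b *\<^sub>R b) \<longlonglongrightarrow> 0"
proof
  assume null: "(\<lambda>n. \<Sum>b\<in>B. D n b *\<^sub>R b) \<longlonglongrightarrow> 0"
  have "\<bar>D n b\<bar> \<le> 1" if "b \<in> B" for n b
    using member_le_sum[of b B "\<lambda>b. \<bar>D n b\<bar>"] that fin normalized by simp
  then obtain l r where r: "strict_mono r" and lim: "\<forall>b\<in>B. (\<lambda>n. D (r n) b) \<longlonglongrightarrow> l b"
    using coefficients_convergent_subseq[OF fin] by blast
  have "(\<lambda>n. \<Sum>b\<in>B. \<bar>D (r n) b\<bar>) \<longlonglongrightarrow> (\<Sum>b\<in>B. \<bar>l b\<bar>)"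
    using lim by (intro tendsto_sum tendsto_rabs) auto
  then have l_normalized: "(\<Sum>b\<in>B. \<bar>l b\<bar>) = 1"
    using normalized by (simp add: LIMSEQ_const_iff)
  have "(\<lambda>n. \<Sum>b\<in>B. D (r n) b *\<^sub>R b) \<longlonglongrightarrow> (\<Sum>b\<in>B. l b *\<^sub>R b)"
    using lim by (intro tendsto_sum tendsto_scaleR tendsto_const) auto
  moreover have "(\<lambda>n. \<Sum>b\<in>B. D (r n) b *\<^sub>R b) \<longlonglongrightarrow> 0"
    using LIMSEQ_subseq_LIMSEQ[OF null r] by (simp add: o_def)
  ultimately have "(\<Sum>b\<in>B. l b *\<^sub>R b) = 0" using LIMSEQ_unique by blast
  then have "\<forall>b\<in>B. l b = 0" using ind dependent_finite[OF fin] by blast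
  then show False using l_normalized by simp
qed

lemma independent_coefficients_bounded:
  fixes B :: "'b::real_normed_vector set"
  assumes fin: "finite B" and ind: "independent B"
  shows "\<exists>K. \<forall>c. (\<Sum>b\<in>B. \<bar>c b\<bar>) \<le> K * norm (\<Sum>b\<in>B. c b *\<^sub>R b)"
proof (rule ccontr)
  assume "\<not> ?thesis"
  then have "\<forall>n::nat. \<exists>c. real (Suc n) * norm (\<Sum>b\<in>B. c b *\<^sub>R b) < (\<Sum>b\<in>B. \<bar>c b\<bar>)"
    by (meson not_le)
  then obtain C where C: "\<And>n. real (Suc n) * norm (\<Sum>b\<in>B. C n b *\<^sub>R b) < (\<Sum>b\<in>B. \<bar>C n b\<bar>)"
    by metis
  define N where "N n = (\<Sum>b\<in>B. \<bar>C n b\<bar>)" for n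
  have N_pos: "N n > 0" for n
    using C[of n] unfolding N_def by (smt (verit) norm_ge_zero of_nat_0_le_iff zero_le_mult_iff)
  define D where "D n b = C n b / N n" for n b
  have "(\<Sum>b\<in>B. \<bar>D n b\<bar>) = 1" for n
    using N_pos[of n] unfolding D_def N_def by (simp add: sum_divide_distrib[symmetric])
  moreover have "(\<lambda>n. \<Sum>b\<in>B. D n b *\<^sub>R b) \<longlonglongrightarrow> 0"
  proof (rule Lim_null_comparison)
    show "(\<lambda>n. 1 / real (Suc n)) \<longlonglongrightarrow> 0"
      using LIMSEQ_Suc[OF lim_1_over_n] by simp
    have "norm (\<Sum>b\<in>B. D n b *\<^sub>R b) \<le> 1 / real (Suc n)" for n
    proof -
      have "(\<Sum>b\<in>B. D n b *\<^sub>R b) = (1 / N n) *\<^sub>R (\<Sum>b\<in>B. C n b *\<^sub>R b)"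
        unfolding D_def by (simp add: scaleR_sum_right)
      then show ?thesis
        using C[of n] N_pos[of n] unfolding N_def by (simp add: field_simps)
    qed
    then show "\<forall>\<^sub>F n in sequentially. norm (\<Sum>b\<in>B. D n b *\<^sub>R b) \<le> 1 / real (Suc n)"
      by simp
  qed
  ultimately show False using independent_normalized_combinations_not_null[OF fin ind] by blast
qed

lemma linear_on_fin_dim_bounded:
  fixes f :: "'b::real_normed_vector \<Rightarrow> 'c::real_normed_vector"
  assumes V: "fin_dim_space V" and f: "linear_on V f"
  shows "\<exists>K. \<forall>x\<in>V. norm (f x) \<le> K * norm x"
proof -
  obtain B0 where B0: "finite B0" "B0 \<subseteq> V" "span B0 = V"
    using V unfolding fin_dim_space_def by blast
  obtain B where B: "B \<subseteq> B0" "independent B" "B0 \<subseteq> span B"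
    using maximal_independent_subset by blast
  have finB: "finite B" using B0 B finite_subset by blast
  have spanB: "span B = V"
    using B B0 span_mono span_minimal[OF _ subspace_span] by (metis subset_antisym)
  obtain K where K: "\<And>c. (\<Sum>b\<in>B. \<bar>c b\<bar>) \<le> K * norm (\<Sum>b\<in>B. c b *\<^sub>R b)"
    using independent_coefficients_bounded[OF finB B(2)] by blast
  define F where "F = (\<Sum>b\<in>B. norm (f b))"
  have F_ge: "norm (f b) \<le> F" if "b \<in> B" for b
    unfolding F_def using finB that by (intro member_le_sum) auto
  show ?thesis
  proof (intro exI ballI)
    fix x assume "x \<in> V"
    then obtain c where x: "x = (\<Sum>b\<in>B. c b *\<^sub>R b)"
      using span_finite[OF finB] spanB by auto
    have "f x = (\<Sum>b\<in>B. c b *\<^sub>R f b)"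
      unfolding x using B B0 by (intro linear_on_sum[OF f fin_dim_space_subspace[OF V] finB]) auto
    then have "norm (f x) \<le> (\<Sum>b\<in>B. \<bar>c b\<bar> * norm (f b))"
      by (metis (no_types, lifting) norm_scaleR norm_sum sum.cong)
    also have "\<dots> \<le> (\<Sum>b\<in>B. \<bar>c b\<bar>) * F"
      unfolding sum_distrib_right by (intro sum_mono mult_left_mono F_ge) auto
    also have "\<dots> \<le> (K * norm x) * F"
      using K[of c] x F_ge by (intro mult_right_mono) (auto simp: F_def sum_nonneg)
    finally show "norm (f x) \<le> (F * K) * norm x" by (simp add: algebra_simps)
  qed
qed

lemma has_vector_derivative_linear_on:
  fixes f :: "'b::real_normed_vector \<Rightarrow> 'c::real_normed_vector" and \<sigma> :: "real \<Rightarrow> 'b"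
  assumes V: "fin_dim_space V" and f: "linear_on V f"
    and T: "open T" "t \<in> T" and in_V: "\<forall>s\<in>T. \<sigma> s \<in> V" "d \<in> V"
    and der: "(\<sigma> has_vector_derivative d) (at t)"
  shows "((\<lambda>s. f (\<sigma> s)) has_vector_derivative f d) (at t)"
proof -
  obtain K where K: "\<forall>x\<in>V. norm (f x) \<le> K * norm x"
    using linear_on_fin_dim_bounded[OF V f] by blast
  have sub: "subspace V" using fin_dim_space_subspace[OF V] .
  define err where "err h = \<sigma> (t + h) - \<sigma> t - h *\<^sub>R d" for h
  have lim0: "(\<lambda>h. norm (err h) / norm h) \<midarrow>0\<rightarrow> 0"
    using der unfolding err_def has_vector_derivative_def has_derivative_at by blast
  have f_err: "f (\<sigma> (t + h)) - f (\<sigma> t) - h *\<^sub>R f d = f (err h)" if "t + h \<in> T" for h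
  proof -
    have "\<sigma> (t + h) - \<sigma> t \<in> V" "h *\<^sub>R d \<in> V"
      using sub in_V that T by (auto intro: subspace_diff subspace_scale)
    then show ?thesis
      using linear_on_diff[OF f sub] in_V that T f unfolding err_def linear_on_def by auto
  qed
  have err_in_V: "err h \<in> V" if "t + h \<in> T" for h
    using sub in_V that T unfolding err_def by (auto intro: subspace_diff subspace_scale)
  have near: "eventually (\<lambda>h. t + h \<in> T) (at (0::real))"
  proof -
    obtain e where "e > 0" "ball t e \<subseteq> T" using T open_contains_ball by blast
    then show ?thesis
      unfolding eventually_at by (intro exI[of _ e]) (auto simp: dist_norm subset_eq)
  qed
  have "(\<lambda>h. norm (f (\<sigma> (t + h)) - f (\<sigma> t) - h *\<^sub>R f d) / norm h) \<midarrow>0\<rightarrow> 0"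
  proof (rule Lim_null_comparison)
    show "((\<lambda>h. K * (norm (err h) / norm h)) \<longlongrightarrow> 0) (at 0)"
      using tendsto_mult_right_zero[OF lim0] by simp
    show "\<forall>\<^sub>F h in at 0. norm (norm (f (\<sigma> (t + h)) - f (\<sigma> t) - h *\<^sub>R f d) / norm h)
           \<le> K * (norm (err h) / norm h)"
      using near
    proof (rule eventually_mono)
      fix h assume "t + h \<in> T"
      then have "norm (f (\<sigma> (t + h)) - f (\<sigma> t) - h *\<^sub>R f d) \<le> K * norm (err h)"
        using K f_err err_in_V by simp
      then show "norm (norm (f (\<sigma> (t + h)) - f (\<sigma> t) - h *\<^sub>R f d) / norm h)
           \<le> K * (norm (err h) / norm h)"
        by (simp add: divide_right_mono)
    qed
  qed
  then show ?thesis
    unfolding has_vector_derivative_def has_derivative_at by (simp add: bounded_linear_scaleR_left)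
qed

section \<open>Riesz representation in finite dimension\<close>

definition represents_on :: "('v \<Rightarrow> 'v \<Rightarrow> real) \<Rightarrow> 'v::real_vector set \<Rightarrow> bool" where
  "represents_on ip V \<longleftrightarrow> (\<forall>lf. linear lf \<longrightarrow> (\<exists>x\<in>V. \<forall>g\<in>V. ip g x = lf g))"

text \<open>Induction step: enlarge the spanning set by one vector \<open>b\<close>, correcting the old
  representative along the component of \<open>b\<close> orthogonal to \<open>span B\<close>.\<close>

lemma represents_on_insert:
  fixes ip :: "'v::real_vector \<Rightarrow> 'v \<Rightarrow> real"
  assumes bil: "bilinear ip" and pos: "\<forall>x. x \<noteq> 0 \<longrightarrow> ip x x > 0"
    and IH: "represents_on ip (span B)"
  shows "represents_on ip (span (insert b B))"
  unfolding represents_on_def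
proof (intro allI impI)
  fix lf :: "'v \<Rightarrow> real" assume lf: "linear lf"
  note ip_lin = bilinear_ladd[OF bil] bilinear_radd[OF bil] bilinear_lmul[OF bil]
    bilinear_rmul[OF bil] bilinear_lsub[OF bil] bilinear_rsub[OF bil]
  obtain x0 where x0: "x0 \<in> span B" "\<forall>g\<in>span B. ip g x0 = lf g"
    using IH lf unfolding represents_on_def by blast
  \<comment> \<open>split \<open>b = y + b'\<close> with \<open>y \<in> span B\<close> and \<open>b'\<close> orthogonal to \<open>span B\<close>\<close>
  have "linear (\<lambda>g. ip g b)" using bil unfolding bilinear_def by blast
  then obtain y where y: "y \<in> span B" "\<forall>g\<in>span B. ip g y = ip g b"
    using IH unfolding represents_on_def by blast
  define b' where "b' = b - y"
  have ortho: "ip s b' = 0" if "s \<in> span B" for s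
    using y that unfolding b'_def by (simp add: ip_lin)
  have span_B: "span B \<subseteq> span (insert b B)" by (simp add: span_mono subset_insertI)
  show "\<exists>x\<in>span (insert b B). \<forall>g\<in>span (insert b B). ip g x = lf g"
  proof (cases "b' = 0")
    case True
    then have "span (insert b B) = span B" using y unfolding b'_def by (simp add: span_redundant)
    then show ?thesis using x0 by auto
  next
    case False
    define x where "x = x0 + ((lf b' - ip b' x0) / ip b' b') *\<^sub>R b'"
    have b'_pos: "ip b' b' > 0" using pos False by blast
    have "b' \<in> span (insert b B)"
      unfolding b'_def using y span_B by (meson span_base insertI1 span_diff subsetD)
    then have x_in: "x \<in> span (insert b B)"
      unfolding x_def using x0 span_B by (meson span_add span_scale subsetD)
    have x_on_B: "ip s x = lf s" if "s \<in> span B" for s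
      using x0 ortho[OF that] that unfolding x_def by (simp add: ip_lin)
    have x_on_b: "ip b x = lf b"
    proof -
      have "ip b x = ip b' x + ip y x" unfolding b'_def by (simp add: ip_lin)
      also have "ip b' x = lf b' - ip b' x0 + ip b' x0"
        unfolding x_def using b'_pos by (simp add: ip_lin)
      also have "ip y x = lf y" using x_on_B y by blast
      finally show ?thesis using linear_add[OF lf, of b' y] unfolding b'_def by simp
    qed
    show ?thesis
    proof (intro bexI[OF _ x_in] ballI)
      fix g assume "g \<in> span (insert b B)"
      then obtain k where k: "g - k *\<^sub>R b \<in> span B" using span_insert by blast
      have "ip g x = ip (g - k *\<^sub>R b) x + k * ip b x" by (simp add: ip_lin)
      also have "\<dots> = lf (g - k *\<^sub>R b) + k * lf b" using x_on_B[OF k] x_on_b by simp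
      also have "\<dots> = lf g" using linear_diff[OF lf] linear_scale[OF lf] by simp
      finally show "ip g x = lf g" .
    qed
  qed
qed

text \<open>Unique representatives exist on every finite-dimensional space.\<close>

lemma riesz_representation:
  fixes ip :: "'v::real_vector \<Rightarrow> 'v \<Rightarrow> real"
  assumes bil: "bilinear ip" and pos: "\<forall>x. x \<noteq> 0 \<longrightarrow> ip x x > 0"
    and V: "fin_dim_space V" and lf: "linear lf"
  shows "\<exists>!x. x \<in> V \<and> (\<forall>g\<in>V. ip g x = lf g)"
proof -
  obtain B where B: "finite B" "span B = V" using V unfolding fin_dim_space_def by blast
  have "represents_on ip (span B)"
    using B(1)
  proof (induction B rule: finite_induct)
    case empty
    show ?case
      unfolding represents_on_def using bilinear_lzero[OF bil] by (auto simp: linear_0)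
  next
    case (insert b B)
    then show ?case using represents_on_insert[OF bil pos] by blast
  qed
  then obtain x where x: "x \<in> V" "\<forall>g\<in>V. ip g x = lf g"
    using lf B(2) unfolding represents_on_def by blast
  show ?thesis
  proof (rule ex1I[of _ x])
    show "x \<in> V \<and> (\<forall>g\<in>V. ip g x = lf g)" using x by blast
    fix z assume z: "z \<in> V \<and> (\<forall>g\<in>V. ip g z = lf g)"
    have "z - x \<in> V" using z x fin_dim_space_subspace[OF V] subspace_diff by blast
    then have "ip (z - x) (z - x) = 0" using z x by (simp add: bilinear_rsub[OF bil])
    then show "z = x" using pos by (metis less_irrefl right_minus_eq)
  qed
qed

section \<open>The discrete operators of the primal-dual setting\<close>

locale pd_surface =
  fixes S :: "('a::real_vector, 'b::real_vector, 'c::real_vector) pd_struct"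
  assumes setting: "pd_setting S"
begin

lemma fin_dim_spaces: "fin_dim_space (P0 S)" "fin_dim_space (P1 S)" "fin_dim_space (D2 S)"
  using setting unfolding pd_setting_def by auto

lemma subspaces: "subspace (P0 S)" "subspace (P1 S)" "subspace (D2 S)"
  using fin_dim_spaces by (auto intro: fin_dim_space_subspace)

lemma linear_operations:
  "linear (intg S)" "bilinear (w02 S)" "bilinear (w11 S)" "bilinear (w20 S)"
  "linear (hs0 S)" "linear (hs1 S)" "linear (hs2 S)" "linear (ext0 S)" "linear (ext1 S)"
  using setting unfolding pd_setting_def by auto

lemmas form_algebra = linear_add[OF linear_operations(1)] linear_scale[OF linear_operations(1)]
  linear_add[OF linear_operations(5)] linear_scale[OF linear_operations(5)]
  linear_add[OF linear_operations(6)] linear_scale[OF linear_operations(6)]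
  linear_add[OF linear_operations(7)] linear_scale[OF linear_operations(7)]
  linear_add[OF linear_operations(8)] linear_scale[OF linear_operations(8)]
  linear_add[OF linear_operations(9)] linear_scale[OF linear_operations(9)]
  bilinear_radd[OF linear_operations(2)] bilinear_rmul[OF linear_operations(2)]
  bilinear_ladd[OF linear_operations(2)] bilinear_lmul[OF linear_operations(2)]
  bilinear_radd[OF linear_operations(3)] bilinear_rmul[OF linear_operations(3)]
  bilinear_ladd[OF linear_operations(3)] bilinear_lmul[OF linear_operations(3)]
  bilinear_radd[OF linear_operations(4)] bilinear_rmul[OF linear_operations(4)]
  bilinear_ladd[OF linear_operations(4)] bilinear_lmul[OF linear_operations(4)]

lemma ip_bilinear: "bilinear (ip0 S)" "bilinear (ip1 S)" "bilinear (ip2 S)"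
  unfolding bilinear_def ip0_def ip1_def ip2_def
  by (intro conjI allI linearI; simp add: form_algebra)+

lemma ip_positive:
  "\<forall>x. x \<noteq> 0 \<longrightarrow> ip0 S x x > 0" "\<forall>x. x \<noteq> 0 \<longrightarrow> ip1 S x x > 0"
  using setting unfolding pd_setting_def by auto

lemma dstar1_ex1: "\<exists>!x. x \<in> P1 S \<and> (\<forall>g\<in>P1 S. ip1 S g x = - intg S (w11 S g w))"
  by (rule riesz_representation[OF ip_bilinear(2) ip_positive(2) fin_dim_spaces(2)])
    (intro linearI; simp add: form_algebra)

lemma dstar2_ex1: "\<exists>!x. x \<in> P0 S \<and> (\<forall>g\<in>P0 S. ip0 S g x = intg S (w02 S g w))"
  by (rule riesz_representation[OF ip_bilinear(1) ip_positive(1) fin_dim_spaces(1)])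
    (intro linearI; simp add: form_algebra)

lemma codiff1_ex1: "\<exists>!x. x \<in> P0 S \<and> (\<forall>g\<in>P0 S. ip0 S g x = ip1 S (ext0 S g) w)"
  by (rule riesz_representation[OF ip_bilinear(1) ip_positive(1) fin_dim_spaces(1)])
    (intro linearI; simp add: form_algebra bilinear_ladd[OF ip_bilinear(2)]
      bilinear_lmul[OF ip_bilinear(2)])

lemma codiff2_ex1: "\<exists>!x. x \<in> P1 S \<and> (\<forall>g\<in>P1 S. ip1 S g x = ip2 S (ext1 S g) w)"
  by (rule riesz_representation[OF ip_bilinear(2) ip_positive(2) fin_dim_spaces(2)])
    (intro linearI; simp add: form_algebra bilinear_ladd[OF ip_bilinear(3)]
      bilinear_lmul[OF ip_bilinear(3)])

lemma dstar1: "dstar1 S w \<in> P1 S" "g \<in> P1 S \<Longrightarrow> ip1 S g (dstar1 S w) = - intg S (w11 S g w)"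
  using theI'[OF dstar1_ex1] unfolding dstar1_def by blast+

lemma dstar1_eqI:
  "x \<in> P1 S \<Longrightarrow> (\<And>g. g \<in> P1 S \<Longrightarrow> ip1 S g x = - intg S (w11 S g w)) \<Longrightarrow> dstar1 S w = x"
  unfolding dstar1_def by (rule the1_equality[OF dstar1_ex1]) blast

lemma dstar2: "dstar2 S w \<in> P0 S" "g \<in> P0 S \<Longrightarrow> ip0 S g (dstar2 S w) = intg S (w02 S g w)"
  using theI'[OF dstar2_ex1] unfolding dstar2_def by blast+

lemma dstar2_eqI:
  "x \<in> P0 S \<Longrightarrow> (\<And>g. g \<in> P0 S \<Longrightarrow> ip0 S g x = intg S (w02 S g w)) \<Longrightarrow> dstar2 S w = x"
  unfolding dstar2_def by (rule the1_equality[OF dstar2_ex1]) blast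

lemma codiff1: "codiff1 S w \<in> P0 S" "g \<in> P0 S \<Longrightarrow> ip0 S g (codiff1 S w) = ip1 S (ext0 S g) w"
  using theI'[OF codiff1_ex1] unfolding codiff1_def by blast+

lemma codiff1_eqI:
  "x \<in> P0 S \<Longrightarrow> (\<And>g. g \<in> P0 S \<Longrightarrow> ip0 S g x = ip1 S (ext0 S g) w) \<Longrightarrow> codiff1 S w = x"
  unfolding codiff1_def by (rule the1_equality[OF codiff1_ex1]) blast

lemma codiff2: "codiff2 S w \<in> P1 S" "g \<in> P1 S \<Longrightarrow> ip1 S g (codiff2 S w) = ip2 S (ext1 S g) w"
  using theI'[OF codiff2_ex1] unfolding codiff2_def by blast+

text \<open>By uniqueness of Riesz representatives, the operators are linear.\<close>

lemma linear_dstar1: "linear (dstar1 S)"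
proof
  show "dstar1 S (a + b) = dstar1 S a + dstar1 S b" for a b
    using dstar1 subspaces(2)
    by (intro dstar1_eqI) (auto simp: subspace_add bilinear_radd[OF ip_bilinear(2)] form_algebra)
  show "dstar1 S (r *\<^sub>R a) = r *\<^sub>R dstar1 S a" for r a
    using dstar1 subspaces(2)
    by (intro dstar1_eqI) (auto simp: subspace_scale bilinear_rmul[OF ip_bilinear(2)] form_algebra)
qed

lemma linear_dstar2: "linear (dstar2 S)"
proof
  show "dstar2 S (a + b) = dstar2 S a + dstar2 S b" for a b
    using dstar2 subspaces(1)
    by (intro dstar2_eqI) (auto simp: subspace_add bilinear_radd[OF ip_bilinear(1)] form_algebra)
  show "dstar2 S (r *\<^sub>R a) = r *\<^sub>R dstar2 S a" for r a
    using dstar2 subspaces(1)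
    by (intro dstar2_eqI) (auto simp: subspace_scale bilinear_rmul[OF ip_bilinear(1)] form_algebra)
qed

lemma linear_codiff1: "linear (codiff1 S)"
proof
  show "codiff1 S (a + b) = codiff1 S a + codiff1 S b" for a b
    using codiff1 subspaces(1)
    by (intro codiff1_eqI) (auto simp: subspace_add ip_bilinear[THEN bilinear_radd])
  show "codiff1 S (r *\<^sub>R a) = r *\<^sub>R codiff1 S a" for r a
    using codiff1 subspaces(1)
    by (intro codiff1_eqI) (auto simp: subspace_scale ip_bilinear[THEN bilinear_rmul])
qed

lemma w20_w02: "w20 S z f = w02 S f z"
  using setting unfolding pd_setting_def by (elim conjE) (rule spec2)

lemma w11_antisym: "w11 S x y = - w11 S y x"
  using setting unfolding pd_setting_def by (elim conjE) (rule spec2)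

lemma ext0_primal: "g \<in> P0 S \<Longrightarrow> ext0 S g \<in> P1 S"
proof -
  have "ext0 S ` P0 S \<subseteq> P1 S" using setting unfolding pd_setting_def by (elim conjE) assumption
  then show "g \<in> P0 S \<Longrightarrow> ext0 S g \<in> P1 S" by blast
qed

lemma ext1_dual: "u \<in> D1 S \<Longrightarrow> ext1 S u \<in> D2 S"
proof -
  have "ext1 S ` D1 S \<subseteq> D2 S" using setting unfolding pd_setting_def by (elim conjE) assumption
  then show "u \<in> D1 S \<Longrightarrow> ext1 S u \<in> D2 S" by blast
qed

lemma ext1_ext0: "g \<in> P0 S \<Longrightarrow> ext1 S (ext0 S g) = 0"
proof -
  have "\<forall>x \<in> P0 S \<union> D0 S. ext1 S (ext0 S x) = 0"
    using setting unfolding pd_setting_def by (elim conjE) assumption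
  then show "g \<in> P0 S \<Longrightarrow> ext1 S (ext0 S g) = 0" by blast
qed

lemma integration_by_parts:
  assumes "u \<in> D1 S" "g \<in> P0 S"
  shows "intg S (w20 S (ext1 S u) g) = intg S (w11 S u (ext0 S g))"
proof -
  have "\<forall>x \<in> P1 S \<union> D1 S. \<forall>y \<in> P0 S \<union> D0 S.
      intg S (w20 S (ext1 S x) y) = intg S (w11 S x (ext0 S y))"
    using setting unfolding pd_setting_def by (elim conjE) assumption
  then show ?thesis using assms by blast
qed

text \<open>Discrete commuting property \<open>\<star>\<^sub>h d = \<delta>\<^sup>h \<star>\<^sub>h\<close> on dual 1-forms: it follows from
  integration by parts and the antisymmetry of the wedge product of 1-forms.\<close>

lemma dstar2_ext1:
  assumes u: "u \<in> D1 S"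
  shows "dstar2 S (ext1 S u) = codiff1 S (dstar1 S u)"
proof (rule codiff1_eqI[OF dstar2(1), symmetric])
  fix g assume g: "g \<in> P0 S"
  have "ip0 S g (dstar2 S (ext1 S u)) = intg S (w20 S (ext1 S u) g)"
    using dstar2(2)[OF g] by (simp add: w20_w02)
  also have "\<dots> = - intg S (w11 S (ext0 S g) u)"
    using integration_by_parts[OF u g] w11_antisym[of u "ext0 S g"]
    by (simp add: linear_neg[OF linear_operations(1)])
  also have "\<dots> = ip1 S (ext0 S g) (dstar1 S u)" using dstar1(2)[OF ext0_primal[OF g]] by simp
  finally show "ip0 S g (dstar2 S (ext1 S u)) = ip1 S (ext0 S g) (dstar1 S u)" .
qed

text \<open>\<open>\<delta>\<^sup>h \<delta>\<^sup>h = 0\<close>, dual to \<open>d d = 0\<close> on primal 0-forms.\<close>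

lemma codiff1_codiff2: "codiff1 S (codiff2 S w) = 0"
proof (rule codiff1_eqI)
  show "0 \<in> P0 S" using subspaces(1) subspace_0 by blast
  fix g assume g: "g \<in> P0 S"
  show "ip0 S g 0 = ip1 S (ext0 S g) (codiff2 S w)"
    using codiff2(2)[OF ext0_primal[OF g]] ext1_ext0[OF g]
    by (simp add: bilinear_rzero[OF ip_bilinear(1)] bilinear_lzero[OF ip_bilinear(3)])
qed

end

section \<open>Dual vorticity\<close>

locale pd_surface_invertible = pd_surface +
  assumes bij1: "bij_betw (dstar1 S) (D1 S) (P1 S)"
    and bij2: "bij_betw (dstar2 S) (D2 S) (P0 S)"
begin

abbreviation dstar1_inv :: "'b \<Rightarrow> 'b" where "dstar1_inv \<equiv> inv_into (D1 S) (dstar1 S)"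
abbreviation dstar2_inv :: "'a \<Rightarrow> 'c" where "dstar2_inv \<equiv> inv_into (D2 S) (dstar2 S)"

definition vorticity :: "'b \<Rightarrow> 'c" where "vorticity p = dstar2_inv (codiff1 S p)"

text \<open>\<open>\<zeta>\<^sub>d dS = d v\<close> with \<open>v = \<star>\<^sub>h\<^sup>-\<^sup>1 p\<close>, by the commuting property.\<close>

lemma vorticity_eq_curl:
  assumes p: "p \<in> P1 S"
  shows "vorticity p = ext1 S (dstar1_inv p)"
proof -
  have u: "dstar1_inv p \<in> D1 S" "dstar1 S (dstar1_inv p) = p"
    using p bij1 by (auto simp: bij_betw_def intro: inv_into_into f_inv_into_f)
  then have "dstar2 S (ext1 S (dstar1_inv p)) = codiff1 S p"
    using dstar2_ext1[OF u(1)] by simp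
  then show ?thesis
    unfolding vorticity_def using bij_betw_inv_into_left[OF bij2 ext1_dual[OF u(1)]] by simp
qed

lemma linear_on_vorticity: "linear_on (P1 S) vorticity"
proof -
  have "linear_on (P0 S) dstar2_inv"
    using linear_on_inv_into[OF linear_dstar2 subspaces(3)] bij2 unfolding bij_betw_def by simp
  moreover have "codiff1 S ` P1 S \<subseteq> P0 S" using codiff1(1) by blast
  ultimately show ?thesis
    unfolding vorticity_def by (rule linear_on_comp_linear[OF _ linear_codiff1 _ subspaces(2)])
qed

text \<open>Applying \<open>\<star>\<^sub>h\<^sup>-\<^sup>1 \<delta>\<^sup>h\<close> to \<open>s + \<star>\<^sub>h q + \<delta>\<^sup>h r = 0\<close> kills \<open>\<delta>\<^sup>h r\<close> and turns \<open>\<star>\<^sub>h q\<close>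
  into \<open>d q\<close>.\<close>

lemma vorticity_balance:
  assumes q: "q \<in> D1 S" and balance: "s + dstar1 S q + codiff2 S r = 0"
  shows "s \<in> P1 S" and "vorticity s = - ext1 S q"
proof -
  have "s = - (dstar1 S q + codiff2 S r)"
    using balance by (subst eq_neg_iff_add_eq_0) (simp add: add.assoc)
  then have s: "s = - dstar1 S q - codiff2 S r" by simp
  then show "s \<in> P1 S"
    using subspace_diff[OF subspaces(2) subspace_neg[OF subspaces(2) dstar1(1)] codiff2(1)] by simp
  have "codiff1 S s = - dstar2 S (ext1 S q)"
    unfolding s dstar2_ext1[OF q] linear_diff[OF linear_codiff1] linear_neg[OF linear_codiff1]
      codiff1_codiff2 by simp
  also have "\<dots> = dstar2 S (- ext1 S q)" by (simp add: linear_neg[OF linear_dstar2])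
  finally show "vorticity s = - ext1 S q"
    unfolding vorticity_def
    using bij_betw_inv_into_left[OF bij2 subspace_neg[OF subspaces(3) ext1_dual[OF q]]] by simp
qed

end

section \<open>Local conservation of the dual vorticity\<close>

lemma dual_mesh_cell:
  assumes "dual_mesh S cells edges osgn cint eint" and "c \<in> cells"
  shows "linear (cint c)"
    and "a \<in> D1 S \<Longrightarrow> cint c (ext1 S a) = (\<Sum>e\<in>edges c. osgn c e * eint e a)"
  using assms unfolding dual_mesh_def by blast+

theorem mainTheorem13:
  fixes S :: "('a::real_normed_vector, 'b::real_normed_vector, 'c::real_normed_vector) pd_struct"
    and T :: "real set"
    and \<sigma> \<sigma>' Q :: "real \<Rightarrow> 'b" and \<rho> :: "real \<Rightarrow> 'c"
    and cells :: "'cell set" and edges :: "'cell \<Rightarrow> 'edge set"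
    and osgn :: "'cell \<Rightarrow> 'edge \<Rightarrow> real" and cint :: "'cell \<Rightarrow> 'c \<Rightarrow> real"
    and eint :: "'edge \<Rightarrow> 'b \<Rightarrow> real"
  assumes setting: "pd_setting S"
    and mesh: "dual_mesh S cells edges osgn cint eint"
    and bij1: "bij_betw (dstar1 S) (D1 S) (P1 S)"
    and bij2: "bij_betw (dstar2 S) (D2 S) (P0 S)"
    and T: "open T"
    and sigma: "\<forall>t\<in>T. \<sigma> t \<in> P1 S \<and> (\<sigma> has_vector_derivative \<sigma>' t) (at t)"
    and sigma_C1: "continuous_on T \<sigma>'"
    and eq: "\<forall>t\<in>T. Q t \<in> D1 S \<and> \<rho> t \<in> P2 S \<and>
                   \<sigma>' t + dstar1 S (Q t) + codiff2 S (\<rho> t) = 0"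
  shows "let \<zeta>p = (\<lambda>t. codiff1 S (\<sigma> t));
             Z = (\<lambda>t. inv_into (D2 S) (dstar2 S) (\<zeta>p t));
             v = (\<lambda>t. inv_into (D1 S) (dstar1 S) (\<sigma> t))
         in (\<forall>t\<in>T. Z t = ext1 S (v t)) \<and>
            (\<forall>t\<in>T. (Z has_vector_derivative - ext1 S (Q t)) (at t)) \<and>
            (\<forall>c\<in>cells. \<forall>t\<in>T.
               ((\<lambda>s. cint c (Z s)) has_real_derivative
                  - (\<Sum>e\<in>edges c. osgn c e * eint e (Q t))) (at t))"
proof -
  interpret pd_surface_invertible S
    using setting bij1 bij2 by unfold_locales
  have balance: "\<sigma>' t \<in> P1 S" "vorticity (\<sigma>' t) = - ext1 S (Q t)" if "t \<in> T" for t
    using vorticity_balance[of "Q t" "\<sigma>' t" "\<rho> t"] eq that by auto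
  \<comment> \<open>the vorticity map is linear on primal 1-forms, so it commutes with \<open>\<partial>\<^sub>t\<close>\<close>
  have Z_deriv: "((\<lambda>s. vorticity (\<sigma> s)) has_vector_derivative - ext1 S (Q t)) (at t)"
    if t: "t \<in> T" for t
    using has_vector_derivative_linear_on[OF fin_dim_spaces(2) linear_on_vorticity T t _ balance(1)[OF t]]
      sigma balance(2)[OF t] t by auto
  have cell_deriv: "((\<lambda>s. cint c (vorticity (\<sigma> s))) has_real_derivative
                  - (\<Sum>e\<in>edges c. osgn c e * eint e (Q t))) (at t)"
    if c: "c \<in> cells" and t: "t \<in> T" for c t
  proof -
    have "((\<lambda>s. cint c (vorticity (\<sigma> s))) has_vector_derivative cint c (- ext1 S (Q t))) (at t)"
      using has_vector_derivative_linear_on[OF fin_dim_spaces(2)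
          linear_on_comp[OF dual_mesh_cell(1)[OF mesh c] linear_on_vorticity] T t _ balance(1)[OF t]]
        sigma balance(2)[OF t] t by auto
    moreover have "cint c (- ext1 S (Q t)) = - (\<Sum>e\<in>edges c. osgn c e * eint e (Q t))"
      using dual_mesh_cell[OF mesh c] eq t by (simp add: linear_neg)
    ultimately show ?thesis by (simp add: has_real_derivative_iff_has_vector_derivative)
  qed
  show ?thesis
    unfolding Let_def vorticity_def[symmetric]
    using vorticity_eq_curl sigma Z_deriv cell_deriv by simp
qed

end
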